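(* Let $A \in \mathbb{R}^{M\times N}$ with $M,N$ powers of two, $K = MN$, $k=\log_2 K$, row-major entries $a_z$ ($z = iN+j$), and let $T_{h,p} = \sum_{z = pK/2^h}^{(p+1)K/2^h - 1} |a_z|^2$ ($0\le h\le k$, $0\le p<2^h$) be its segment tree of squared norms. Suppose a Bucket Brigade QRAM stores $K$ memory cells $\{\ket{L_z}\}_{z=0}^{K-1}$ of $1+2t$ qubits each, with $\ket{L_0} = \ket{\mathrm{s}(a_0)}\ket{T_{0,0}}^t\ket{b}^t$ ($b$ an arbitrary $t$-bit string) and $\ket{L_z} = \ket{\mathrm{s}(a_z)}\ket{T_{l(z),2d(z)}}^t\ket{T_{l(z),2d(z)+1}}^t$ for $1\le z\le K-1$, where $l(z) = \lfloor\log_2 z\rfloor + 1$, $d(z) = z - 2^{\lfloor \log_2 z\rfloor}$, $\mathrm{s}(a_z) = 0$ if $a_z\ge 0$ and $1$ if $a_z<0$, and values are $t$-bit fixed-point basis encodings. The BBQRAM retrieval is $\ket{z}^k\ket{0}^{1+2t} \mapsto \ket{z}^k\ket{L_z}^{1+2t}$ for $0 \le z < K$ (extended linearly to superpositions, and allowing only designated sub-registers of the cell to be copied into the working register). Then this memory layout enables the following retrievals, for arbitrary nonzero coefficients $\alpha_z \in \mathbb{C}$: (1) ($h=0$) $\ket{0}^k\ket{0}^1\ket{0}^t\ket{0}^t \mapsto \ket{0}^k\ket{0}^1\ket{T_{0,0}}^t\ket{0}^t$; (2) for every $1 \le h \le k$: $\sum_{z=2^{h-1}}^{2^h-1}\alpha_z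 \ket{z}^k \ket{0}^1\ket{0}^{2t} \mapsto \sum_{z=2^{h-1}}^{2^h-1} \alpha_z\ket{z}^k\ket{0}^1\ket{T_{l(z),2d(z)}}^t\ket{T_{l(z),2d(z)+1}}^t$, where $\ket{z}^k$ for $z<2^h$ is $\ket{0}^{k-h}\ket{z}^h$; these are exactly the sibling pairs at height $h$ of $T$; (3) $\sum_{z=0}^{K-1}\alpha_z\ket{z}^k\ket{0}^1\ket{0}^t\ket{0}^t \mapsto \sum_{z=0}^{K-1}\alpha_z \ket{z}^k\ket{\mathrm{s}(a_z)}^1\ket{0}^t\ket{0}^t$.
   Context: $\ket{\psi}^s$ denotes an $s$-qubit register; $\ket{z}^k$ is the $k$-bit binary (basis) encoding of the integer $z$ with most significant qubit leftmost. The Bucket Brigade QRAM is a binary tree of routing switches whose leaves are memory cells storing classical bit strings in the computational basis, queried coherently by an address register. *)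

theory Defs
  imports "HOL-Analysis.Analysis"
begin

text \<open>Basis states of the joint register (address, sign qubit, first t-bit register,
 second t-bit register) are tuples of naturals (z, s, u, v), each component being the
 integer whose binary encoding is the register content.\<close>

type_synonym qstate = "nat \<times> nat \<times> nat \<times> nat \<Rightarrow> complex"

definition rowmajor :: "nat \<Rightarrow> (nat \<Rightarrow> nat \<Rightarrow> real) \<Rightarrow> nat \<Rightarrow> real" where
  "rowmajor N A z = A (z div N) (z mod N)"

definition segT :: "nat \<Rightarrow> (nat \<Rightarrow> real) \<Rightarrow> nat \<Rightarrow> nat \<Rightarrow> real" where
  "segT K a h p = (\<Sum>z \<in> {p * K div 2^h ..< (p + 1) * K div 2^h}. \<bar>a z\<bar>^2)"

definition lev :: "nat \<Rightarrow> nat" where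
  "lev z = nat \<lfloor>log 2 (real z)\<rfloor> + 1"

definition dd :: "nat \<Rightarrow> nat" where
  "dd z = z - 2 ^ nat \<lfloor>log 2 (real z)\<rfloor>"

definition sgnbit :: "real \<Rightarrow> nat" where
  "sgnbit x = (if x \<ge> 0 then 0 else 1)"

text \<open>The memory layout: cell L_z = (sign bit, first t-bit value, second t-bit value);
 enc is the t-bit fixed-point basis encoding, b the arbitrary t-bit string in L_0.\<close>
definition cell :: "nat \<Rightarrow> (nat \<Rightarrow> real) \<Rightarrow> (real \<Rightarrow> nat) \<Rightarrow> nat \<Rightarrow> nat \<Rightarrow> nat \<times> nat \<times> nat" where
  "cell K a enc b z =
     (if z = 0 then (sgnbit (a 0), enc (segT K a 0 0), b)
      else (sgnbit (a z), enc (segT K a (lev z) (2 * dd z)), enc (segT K a (lev z) (2 * dd z + 1))))"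

text \<open>BBQRAM retrieval with a msk selecting which sub-registers of the cell are copied
 (cs: sign qubit, c1: first t-bit register, c2: second t-bit register).  On a basis state
 with the selected working sub-registers equal to 0 it acts as |z>|0> -> |z>|L_z (selected parts)>;
 the standard (unitary, linear) extension XORs the cell contents into the working register.\<close>
definition qram ::
  "nat \<Rightarrow> (nat \<Rightarrow> nat \<times> nat \<times> nat) \<Rightarrow> bool \<times> bool \<times> bool \<Rightarrow> qstate \<Rightarrow> qstate" where
  "qram K L msk \<psi> = (\<lambda>(z, s, u, v).
     (case msk of (cs, c1, c2) \<Rightarrow>
      (case L z of (ls, l1, l2) \<Rightarrow>
        if z < K then
          \<psi> (z, xor s (if cs then ls else 0), xor u (if c1 then l1 else 0),
                xor v (if c2 then l2 else 0))
        else \<psi> (z, s, u, v))))"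

definition superpos ::
  "nat set \<Rightarrow> (nat \<Rightarrow> complex) \<Rightarrow> (nat \<Rightarrow> nat) \<Rightarrow> (nat \<Rightarrow> nat) \<Rightarrow> (nat \<Rightarrow> nat) \<Rightarrow> qstate" where
  "superpos S \<alpha> fs fu fv = (\<lambda>(z, s, u, v).
     if z \<in> S \<and> s = fs z \<and> u = fu z \<and> v = fv z then \<alpha> z else 0)"

end

theory Submission
  imports Defs
begin

text \<open>The retrieval XORs the selected parts of the cell L_z into the working register.  Applied
 to a superposition whose working register is 0 on addresses below K, it therefore yields the
 same amplitudes with the selected parts of L_z in the working register, since
 s XOR l = 0 exactly when s = l.  On the addresses 2^(h-1) \<le> z < 2^h one has l(z) = h and
 d(z) = z - 2^(h-1), so these cells hold the sibling pairs at height h of the segment tree,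
 each exactly once.\<close>

lemma xor_eq_0_iff: "xor x y = 0 \<longleftrightarrow> x = (y :: 'a :: semiring_bit_operations)"
  by (metis xor.assoc xor.left_neutral xor_self_eq)

lemma lev_dd_eq:
  assumes "2 ^ j \<le> z" "z < 2 ^ Suc j"
  shows "lev z = Suc j" "dd z = z - 2 ^ j"
proof -
  have "nat \<lfloor>log 2 (real z)\<rfloor> = j"
    using floor_log_nat_eq_if[of 2 j z] assms by simp
  then show "lev z = Suc j" "dd z = z - 2 ^ j"
    by (simp_all add: lev_def dd_def)
qed

lemma bij_betw_pair_diff:
  "bij_betw (\<lambda>z :: nat. (c, z - p)) {p..<2 * p} ({c} \<times> {..<p})"
  by (rule bij_betw_byWitness[where f' = "\<lambda>(_, y). p + y"]) auto

lemma bij_betw_lev_dd: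
  assumes "1 \<le> h"
  shows "bij_betw (\<lambda>z. (lev z, dd z)) {2^(h-1)..<2^h} ({h} \<times> {..<2^(h-1)})"
proof -
  obtain j where h: "h = Suc j"
    using assms by (cases h) auto
  have "(lev z, dd z) = (Suc j, z - 2^j)" if "z \<in> {2^j..<2 * 2^j}" for z
    using lev_dd_eq[of j z] that by simp
  then have "bij_betw (\<lambda>z. (lev z, dd z)) {2^j..<2 * 2^j} ({Suc j} \<times> {..<2^j})"
    using bij_betw_pair_diff by (rule bij_betw_cong[THEN iffD2])
  then show ?thesis
    using h by simp
qed

lemma superpos_cong:
  assumes "\<And>z. z \<in> S \<Longrightarrow> fs z = gs z \<and> fu z = gu z \<and> fv z = gv z"
  shows "superpos S \<alpha> fs fu fv = superpos S \<alpha> gs gu gv"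
  using assms by (auto simp: superpos_def fun_eq_iff)

lemma qram_superpos_zero:
  assumes "S \<subseteq> {..<K}"
  shows "qram K L (cs, c1, c2) (superpos S \<alpha> (\<lambda>_. 0) (\<lambda>_. 0) (\<lambda>_. 0))
       = superpos S \<alpha> (\<lambda>z. if cs then fst (L z) else 0)
                      (\<lambda>z. if c1 then fst (snd (L z)) else 0)
                      (\<lambda>z. if c2 then snd (snd (L z)) else 0)"
    (is "?lhs = ?rhs")
proof
  fix x :: "nat \<times> nat \<times> nat \<times> nat"
  obtain z s u v where x: "x = (z, s, u, v)"
    by (cases x)
  obtain ls l1 l2 where Lz: "L z = (ls, l1, l2)"
    by (cases "L z")
  show "?lhs x = ?rhs x"
  proof (cases "z \<in> S")
    case True
    with assms have "z < K"
      by auto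
    with True show ?thesis
      by (simp add: x Lz qram_def superpos_def xor_eq_0_iff)
  next
    case False
    then show ?thesis
      by (simp add: x Lz qram_def superpos_def)
  qed
qed

theorem corollary4p2:
  fixes M N K k m n t b :: nat
    and A :: "nat \<Rightarrow> nat \<Rightarrow> real"
    and enc :: "real \<Rightarrow> nat"
  assumes hM: "M = 2 ^ m" and hN: "N = 2 ^ n"
    and hK: "K = M * N" and hk: "k = m + n"
    and henc: "\<forall>x. enc x < 2 ^ t"
    and hb: "b < 2 ^ t"
  defines "a \<equiv> rowmajor N A"
  defines "L \<equiv> cell K a enc b"
  shows
    "qram K L (False, True, False) (superpos {0} (\<lambda>_. 1) (\<lambda>_. 0) (\<lambda>_. 0) (\<lambda>_. 0))
       = superpos {0} (\<lambda>_. 1) (\<lambda>_. 0) (\<lambda>_. enc (segT K a 0 0)) (\<lambda>_. 0)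
     \<and> (\<forall>h \<in> {1..k}. \<forall>\<alpha> :: nat \<Rightarrow> complex. (\<forall>z. \<alpha> z \<noteq> 0) \<longrightarrow>
          qram K L (False, True, True) (superpos {2^(h-1)..<2^h} \<alpha> (\<lambda>_. 0) (\<lambda>_. 0) (\<lambda>_. 0))
          = superpos {2^(h-1)..<2^h} \<alpha> (\<lambda>_. 0)
              (\<lambda>z. enc (segT K a (lev z) (2 * dd z)))
              (\<lambda>z. enc (segT K a (lev z) (2 * dd z + 1))))
     \<and> (\<forall>h \<in> {1..k}. bij_betw (\<lambda>z. (lev z, dd z)) {2^(h-1)..<2^h} ({h} \<times> {..<2^(h-1)}))
     \<and> (\<forall>\<alpha> :: nat \<Rightarrow> complex. (\<forall>z. \<alpha> z \<noteq> 0) \<longrightarrow>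
          qram K L (True, False, False) (superpos {..<K} \<alpha> (\<lambda>_. 0) (\<lambda>_. 0) (\<lambda>_. 0))
          = superpos {..<K} \<alpha> (\<lambda>z. sgnbit (a z)) (\<lambda>_. 0) (\<lambda>_. 0))"
proof (intro conjI ballI allI impI)
  have K: "K = 2 ^ k"
    using hM hN hK hk by (simp add: power_add)
  then have "{0} \<subseteq> {..<K}"
    by simp
  then show "qram K L (False, True, False) (superpos {0} (\<lambda>_. 1) (\<lambda>_. 0) (\<lambda>_. 0) (\<lambda>_. 0))
      = superpos {0} (\<lambda>_. 1) (\<lambda>_. 0) (\<lambda>_. enc (segT K a 0 0)) (\<lambda>_. 0)"
    by (simp add: qram_superpos_zero) (rule superpos_cong; simp add: L_def cell_def)
  fix h assume h: "h \<in> {1..k}"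
  then show "bij_betw (\<lambda>z. (lev z, dd z)) {2^(h-1)..<2^h} ({h} \<times> {..<2^(h-1)})"
    by (intro bij_betw_lev_dd) simp
  fix \<alpha> :: "nat \<Rightarrow> complex"
  have "{2^(h-1)..<2^h} \<subseteq> {..<K}"
    using h K by (auto intro: less_le_trans[OF _ power_increasing])
  moreover have "0 \<notin> {2^(h-1)..<(2::nat)^h}"
    by simp
  ultimately show "qram K L (False, True, True) (superpos {2^(h-1)..<2^h} \<alpha> (\<lambda>_. 0) (\<lambda>_. 0) (\<lambda>_. 0))
      = superpos {2^(h-1)..<2^h} \<alpha> (\<lambda>_. 0)
          (\<lambda>z. enc (segT K a (lev z) (2 * dd z)))
          (\<lambda>z. enc (segT K a (lev z) (2 * dd z + 1)))"
    by (simp add: qram_superpos_zero) (rule superpos_cong; auto simp: L_def cell_def)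
next
  fix \<alpha> :: "nat \<Rightarrow> complex"
  show "qram K L (True, False, False) (superpos {..<K} \<alpha> (\<lambda>_. 0) (\<lambda>_. 0) (\<lambda>_. 0))
      = superpos {..<K} \<alpha> (\<lambda>z. sgnbit (a z)) (\<lambda>_. 0) (\<lambda>_. 0)"
    by (simp add: qram_superpos_zero) (rule superpos_cong; simp add: L_def cell_def)
qed

end
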